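(* Let $\mathcal{D}=\{X_i:i\in I\}$ be a set of random variables on $\Omega$ containing all constant functions, and let $Q$ be a coherent$_1$ marginal prevision on $\mathcal{D}$. Let $\mathcal{L}$ be the set of all random variables $Y$ that can be written as $Y=\sum_{j=1}^n\alpha_jX_{i_j}$ with $X_{i_j}\in\mathcal{D}$, real $\alpha_j$, such that $p_Y=\sum_{j=1}^n\alpha_jQ(X_{i_j})$ is well defined. Then setting $P(Y)=p_Y$ for $Y\in\mathcal{L}$ is well defined (independent of the chosen representation of $Y$), and $P$ is the unique coherent$_1$ extension of $Q$ to $\mathcal{L}$.
   Context: Random variables are real-valued functions on a nonempty set $\Omega$; marginal previsions are extended real numbers. A sum of extended reals is well defined if it does not involve both $+\infty$ and $-\infty$ terms; the convention $0\times(\pm\infty)=0$ is used. Coherence$_1$ (marginal case): $\{P(X_i):i\in I\}$ is coherent$_1$ if for every finite $\{i_1,\dots,i_n\}\subseteq I$, all real $\alpha_1,\dots,\alpha_n$ with $\alpha_j\ge0$ whenever $P(X_{i_j})=+\infty$ and $\alpha_j\le0$ whenever $P(X_{i_j})=-\infty$, and all real $c_1,\dots,c_n$ with $c_j=P(X_{i_j})$ whenever it is finite, $\sup_\omega\sum_{j=1}^n\alpha_j[X_{i_j}(\omega)-c_j]\ge0$. *)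

theory Defs
  imports "HOL-Library.Extended_Real"
begin

text \<open>Random variables on the sample space (the type 'w, nonempty by HOL
convention) are real-valued functions. A set of random variables D together
with a function Q of type ('w \<Rightarrow> real) \<Rightarrow> ereal, considered only on D,
is a marginal prevision. Indexing by the variables themselves (a finite
subset S of D) plays the role of finite index sets.\<close>

definition coherent1 :: "('w \<Rightarrow> real) set \<Rightarrow> (('w \<Rightarrow> real) \<Rightarrow> ereal) \<Rightarrow> bool" where
  "coherent1 D P \<longleftrightarrow>
     (\<forall>S \<alpha> c. finite S \<and> S \<subseteq> D
        \<and> (\<forall>X\<in>S. P X = \<infinity> \<longrightarrow> \<alpha> X \<ge> 0)
        \<and> (\<forall>X\<in>S. P X = -\<infinity> \<longrightarrow> \<alpha> X \<le> 0)
        \<and> (\<forall>X\<in>S. \<bar>P X\<bar> \<noteq> \<infinity> \<longrightarrow> ereal (c X) = P X)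
        \<longrightarrow> (SUP \<omega>. ereal (\<Sum>X\<in>S. \<alpha> X * (X \<omega> - c X))) \<ge> 0)"

text \<open>Well-definedness of the extended-real sum of alpha(X) * Q(X) over S
(convention 0 * (+-infinity) = 0, as in ereal): no +infinity and -infinity
terms at the same time.\<close>

definition wd_sum :: "('w \<Rightarrow> real) set \<Rightarrow> (('w \<Rightarrow> real) \<Rightarrow> real) \<Rightarrow> (('w \<Rightarrow> real) \<Rightarrow> ereal) \<Rightarrow> bool" where
  "wd_sum S \<alpha> Q \<longleftrightarrow>
     \<not> ((\<exists>X\<in>S. ereal (\<alpha> X) * Q X = \<infinity>) \<and> (\<exists>X\<in>S. ereal (\<alpha> X) * Q X = -\<infinity>))"

definition lin_sum :: "('w \<Rightarrow> real) set \<Rightarrow> (('w \<Rightarrow> real) \<Rightarrow> real) \<Rightarrow> (('w \<Rightarrow> real) \<Rightarrow> ereal) \<Rightarrow> ereal" where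
  "lin_sum S \<alpha> Q = (\<Sum>X\<in>S. ereal (\<alpha> X) * Q X)"

definition is_rep :: "('w \<Rightarrow> real) set \<Rightarrow> (('w \<Rightarrow> real) \<Rightarrow> ereal) \<Rightarrow> ('w \<Rightarrow> real) \<Rightarrow> ('w \<Rightarrow> real) set \<Rightarrow> (('w \<Rightarrow> real) \<Rightarrow> real) \<Rightarrow> bool" where
  "is_rep D Q Y S \<alpha> \<longleftrightarrow> finite S \<and> S \<subseteq> D \<and> Y = (\<lambda>\<omega>. \<Sum>X\<in>S. \<alpha> X * X \<omega>) \<and> wd_sum S \<alpha> Q"

definition lin_dom :: "('w \<Rightarrow> real) set \<Rightarrow> (('w \<Rightarrow> real) \<Rightarrow> ereal) \<Rightarrow> ('w \<Rightarrow> real) set" where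
  "lin_dom D Q = {Y. \<exists>S \<alpha>. is_rep D Q Y S \<alpha>}"

end

theory Submission
  imports Defs
begin

text \<open>If a combination \<open>\<Sum>\<gamma>\<^sub>X X\<close> of variables vanishes identically and no term
  \<open>\<gamma>\<^sub>X Q(X)\<close> is \<open>-\<infinity>\<close>, coherence forbids \<open>\<Sum>\<gamma>\<^sub>X Q(X) > 0\<close>, since then
  \<open>\<Sum>\<gamma>\<^sub>X (X - Q(X))\<close> would be a sure loss; and no variable of infinite prevision can carry a
  nonzero coefficient, because its price in the coherence condition is unconstrained. Applied
  to the difference of two representations of Y on a common support, this makes the value of Y
  independent of the representation. A gamble over finitely many elements of the extended
  domain becomes, after merging their representations, a gamble over variables of D, which
  gives coherence of the extension. Finally Y is a one-term representation of itself in the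
  extended domain, so any coherent extension agreeing with Q on D takes the same value.\<close>

text \<open>The sign conditions of \<open>coherent1\<close> say exactly that no term \<open>\<alpha> X * P X\<close> is \<open>-\<infinity>\<close>.\<close>

lemma ereal_times_neq_MInf_iff:
  "ereal g * p \<noteq> -\<infinity> \<longleftrightarrow> (p = \<infinity> \<longrightarrow> 0 \<le> g) \<and> (p = -\<infinity> \<longrightarrow> g \<le> 0)"
  by (cases p) (auto simp: not_less)

lemma ereal_times_neq_PInf_iff:
  "ereal g * p \<noteq> \<infinity> \<longleftrightarrow> (p = \<infinity> \<longrightarrow> g \<le> 0) \<and> (p = -\<infinity> \<longrightarrow> 0 \<le> g)"
  by (cases p) (auto simp: not_less)

lemma sum_ereal_eq_MInf_iff:
  fixes f :: "'a \<Rightarrow> ereal"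
  assumes "finite A" "\<forall>x\<in>A. f x \<noteq> \<infinity>"
  shows "sum f A = -\<infinity> \<longleftrightarrow> (\<exists>x\<in>A. f x = -\<infinity>)"
  using assms
proof (induction A rule: finite_induct)
  case (insert x A)
  then show ?case
    by (cases "f x"; cases "sum f A") (auto simp: sum_Pinfty)
qed simp

lemma sum_sign_consistent:
  assumes "\<forall>i\<in>S. ereal (g i) * q \<noteq> -\<infinity>"
  shows "ereal (sum g S) * q \<noteq> -\<infinity>"
  using assms unfolding ereal_times_neq_MInf_iff by (auto intro: sum_nonneg sum_nonpos)

lemma sum_sign_consistent_neq_0:
  assumes "finite S" "\<forall>j\<in>S. ereal (g j) * q \<noteq> -\<infinity>" "\<bar>q\<bar> = \<infinity>" "i \<in> S" "g i \<noteq> 0"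
  shows "sum g S \<noteq> 0"
proof (cases "q = \<infinity>")
  case True
  then have "\<forall>j\<in>S. 0 \<le> g j" using assms(2) unfolding ereal_times_neq_MInf_iff by simp
  with assms(4,5) have "0 < sum g S"
    by (intro sum_pos2[OF assms(1,4)]) (auto simp: order_le_less)
  then show ?thesis by simp
next
  case False
  then have "q = -\<infinity>" using assms(3) by auto
  then have "\<forall>j\<in>S. g j \<le> 0" using assms(2) unfolding ereal_times_neq_MInf_iff by simp
  with assms(4,5) have "0 < (\<Sum>j\<in>S. - g j)"
    by (intro sum_pos2[OF assms(1,4)]) (auto simp: order_le_less)
  then show ?thesis by (simp add: sum_negf)
qed

lemma lin_sum_eq_PInf_iff:
  "finite S \<Longrightarrow> lin_sum S \<alpha> Q = \<infinity> \<longleftrightarrow> (\<exists>X\<in>S. ereal (\<alpha> X) * Q X = \<infinity>)"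
  by (simp add: lin_sum_def sum_Pinfty)

lemma lin_sum_eq_MInf_iff:
  assumes "finite S" "wd_sum S \<alpha> Q"
  shows "lin_sum S \<alpha> Q = -\<infinity> \<longleftrightarrow> (\<exists>X\<in>S. ereal (\<alpha> X) * Q X = -\<infinity>)"
proof (cases "\<exists>X\<in>S. ereal (\<alpha> X) * Q X = \<infinity>")
  case True
  then have "lin_sum S \<alpha> Q = \<infinity>" using assms(1) lin_sum_eq_PInf_iff by blast
  with True assms(2) show ?thesis unfolding wd_sum_def by auto
next
  case False
  with assms(1) show ?thesis unfolding lin_sum_def by (intro sum_ereal_eq_MInf_iff) auto
qed

lemma lin_sum_real:
  assumes "\<forall>X\<in>S. \<alpha> X \<noteq> 0 \<longrightarrow> \<bar>Q X\<bar> \<noteq> \<infinity>"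
  shows "lin_sum S \<alpha> Q = ereal (\<Sum>X\<in>S. \<alpha> X * real_of_ereal (Q X))"
proof -
  have "lin_sum S \<alpha> Q = (\<Sum>X\<in>S. ereal (\<alpha> X * real_of_ereal (Q X)))"
    unfolding lin_sum_def
  proof (intro sum.cong refl)
    fix X assume "X \<in> S"
    then show "ereal (\<alpha> X) * Q X = ereal (\<alpha> X * real_of_ereal (Q X))"
      using assms by (cases "Q X") auto
  qed
  then show ?thesis by simp
qed

lemma lin_sum_term_sign:
  assumes "finite T" "wd_sum T a Q" "X \<in> T" "ereal g * lin_sum T a Q \<noteq> -\<infinity>"
  shows "ereal (g * a X) * Q X \<noteq> -\<infinity>"
proof -
  have split: "ereal (g * a X) * Q X = ereal g * (ereal (a X) * Q X)"
    by (metis mult.assoc times_ereal.simps(1))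
  consider "ereal (a X) * Q X = \<infinity>" | "ereal (a X) * Q X = -\<infinity>" | "\<bar>ereal (a X) * Q X\<bar> \<noteq> \<infinity>"
    by fastforce
  then show ?thesis
  proof cases
    case 1
    then have "lin_sum T a Q = \<infinity>" using assms(1,3) lin_sum_eq_PInf_iff by blast
    with assms(4) 1 show ?thesis by (simp only: split not_False_eq_True)
  next
    case 2
    then have "lin_sum T a Q = -\<infinity>" using assms(1-3) lin_sum_eq_MInf_iff by blast
    with assms(4) 2 show ?thesis by (simp only: split not_False_eq_True)
  next
    case 3
    then show ?thesis using split by (cases "ereal (a X) * Q X") auto
  qed
qed

definition extend_zero :: "'a set \<Rightarrow> ('a \<Rightarrow> real) \<Rightarrow> 'a \<Rightarrow> real" where
  "extend_zero S \<alpha> X = (if X \<in> S then \<alpha> X else 0)"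

lemma sum_extend_zero:
  fixes g :: "real \<Rightarrow> 'a \<Rightarrow> 'b::comm_monoid_add"
  assumes "finite T" "S \<subseteq> T" "\<And>X. g 0 X = 0"
  shows "(\<Sum>X\<in>T. g (extend_zero S \<alpha> X) X) = (\<Sum>X\<in>S. g (\<alpha> X) X)"
  using assms by (intro sum.mono_neutral_cong_right) (auto simp: extend_zero_def)

lemma is_rep_extend_zero:
  assumes "is_rep D Q Y S \<alpha>" "finite T" "S \<subseteq> T" "T \<subseteq> D"
  shows "is_rep D Q Y T (extend_zero S \<alpha>)" "lin_sum T (extend_zero S \<alpha>) Q = lin_sum S \<alpha> Q"
proof -
  have "Y \<omega> = (\<Sum>X\<in>T. extend_zero S \<alpha> X * X \<omega>)" for \<omega>
    using assms sum_extend_zero[of T S "\<lambda>a X. a * X \<omega>"] by (simp add: is_rep_def)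
  moreover have "wd_sum T (extend_zero S \<alpha>) Q"
    using assms(1) by (auto simp: is_rep_def wd_sum_def extend_zero_def)
  ultimately show "is_rep D Q Y T (extend_zero S \<alpha>)"
    using assms(2,4) by (auto simp: is_rep_def)
  show "lin_sum T (extend_zero S \<alpha>) Q = lin_sum S \<alpha> Q"
    using assms(2,3) sum_extend_zero[of T S "\<lambda>a X. ereal a * Q X"] by (simp add: lin_sum_def)
qed

lemma is_rep_singleton: "X \<in> D \<Longrightarrow> is_rep D Q X {X} (\<lambda>_. 1)"
  by (auto simp: is_rep_def wd_sum_def)

lemma lin_sum_singleton: "lin_sum {X} (\<lambda>_. 1) Q = Q X"
  by (simp add: lin_sum_def)

lemma subset_lin_dom: "D \<subseteq> lin_dom D Q"
  using is_rep_singleton unfolding lin_dom_def by blast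

lemma coherent1D:
  assumes "coherent1 D P" "finite S" "S \<subseteq> D"
    and "\<forall>X\<in>S. ereal (\<alpha> X) * P X \<noteq> -\<infinity>"
    and "\<forall>X\<in>S. \<bar>P X\<bar> \<noteq> \<infinity> \<longrightarrow> ereal (c X) = P X"
  shows "0 \<le> (SUP \<omega>. ereal (\<Sum>X\<in>S. \<alpha> X * (X \<omega> - c X)))"
  using assms unfolding coherent1_def ereal_times_neq_MInf_iff by blast

lemma coherent1I:
  assumes "\<And>S \<alpha> c. finite S \<Longrightarrow> S \<subseteq> D \<Longrightarrow> \<forall>X\<in>S. ereal (\<alpha> X) * P X \<noteq> -\<infinity>
      \<Longrightarrow> \<forall>X\<in>S. \<bar>P X\<bar> \<noteq> \<infinity> \<longrightarrow> ereal (c X) = P X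
      \<Longrightarrow> 0 \<le> (SUP \<omega>. ereal (\<Sum>X\<in>S. \<alpha> X * (X \<omega> - c X)))"
  shows "coherent1 D P"
  using assms unfolding coherent1_def ereal_times_neq_MInf_iff by blast

lemma ex_real_values_with_sum:
  fixes P :: "'a \<Rightarrow> ereal"
  assumes "finite T" "X0 \<in> T" "\<beta> X0 \<noteq> 0" "\<bar>P X0\<bar> = \<infinity>"
  shows "\<exists>d. (\<forall>X\<in>T. \<bar>P X\<bar> \<noteq> \<infinity> \<longrightarrow> ereal (d X) = P X) \<and> (\<Sum>X\<in>T. \<beta> X * d X) = v"
proof -
  define r where "r = (\<Sum>X\<in>T - {X0}. \<beta> X * real_of_ereal (P X))"
  define d where "d X = (if X = X0 then (v - r) / \<beta> X0 else real_of_ereal (P X))" for X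
  have "(\<Sum>X\<in>T. \<beta> X * d X) = \<beta> X0 * d X0 + (\<Sum>X\<in>T - {X0}. \<beta> X * d X)"
    using assms(1,2) by (simp add: sum.remove)
  also have "(\<Sum>X\<in>T - {X0}. \<beta> X * d X) = r"
    unfolding r_def by (intro sum.cong) (auto simp: d_def)
  also have "\<beta> X0 * d X0 = v - r"
    using assms(3) by (simp add: d_def)
  finally show ?thesis
    using assms(2,4) by (intro exI[of _ d]) (auto simp: d_def ereal_real')
qed

lemma coherent1_zero_combination_le:
  assumes "coherent1 D P" "finite T" "T \<subseteq> D"
    and "\<And>\<omega>. (\<Sum>X\<in>T. \<gamma> X * X \<omega>) = 0"
    and "\<forall>X\<in>T. ereal (\<gamma> X) * P X \<noteq> -\<infinity>"
    and "\<forall>X\<in>T. \<bar>P X\<bar> \<noteq> \<infinity> \<longrightarrow> ereal (c X) = P X"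
  shows "(\<Sum>X\<in>T. \<gamma> X * c X) \<le> 0"
proof -
  have "(\<Sum>X\<in>T. \<gamma> X * (X \<omega> - c X)) = - (\<Sum>X\<in>T. \<gamma> X * c X)" for \<omega>
    using assms(4) by (simp add: right_diff_distrib sum_subtractf)
  with coherent1D[OF assms(1-3,5,6)] show ?thesis by simp
qed

text \<open>The price of a variable with infinite prevision is free, so it can turn the constant
  gamble \<open>-\<Sum>\<gamma>\<^sub>X c\<^sub>X\<close> into a sure loss.\<close>

lemma coherent1_zero_combination_finite:
  assumes "coherent1 D P" "finite T" "T \<subseteq> D"
    and "\<And>\<omega>. (\<Sum>X\<in>T. \<gamma> X * X \<omega>) = 0"
    and "\<forall>X\<in>T. ereal (\<gamma> X) * P X \<noteq> -\<infinity>"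
  shows "\<forall>X\<in>T. \<gamma> X \<noteq> 0 \<longrightarrow> \<bar>P X\<bar> \<noteq> \<infinity>"
proof (intro ballI impI notI)
  fix X0 assume "X0 \<in> T" "\<gamma> X0 \<noteq> 0" "\<bar>P X0\<bar> = \<infinity>"
  have "\<exists>c. (\<forall>X\<in>T. \<bar>P X\<bar> \<noteq> \<infinity> \<longrightarrow> ereal (c X) = P X) \<and> (\<Sum>X\<in>T. \<gamma> X * c X) = 1"
    by (rule ex_real_values_with_sum) fact+
  then obtain c where c: "\<forall>X\<in>T. \<bar>P X\<bar> \<noteq> \<infinity> \<longrightarrow> ereal (c X) = P X"
    and "(\<Sum>X\<in>T. \<gamma> X * c X) = 1"
    by blast
  with coherent1_zero_combination_le[OF assms c] show False by simp
qed

lemma lin_sum_le_of_common_support: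
  assumes coh: "coherent1 D Q" and rep1: "is_rep D Q Y T a1" and rep2: "is_rep D Q Y T a2"
  shows "lin_sum T a1 Q \<le> lin_sum T a2 Q"
proof (cases "lin_sum T a1 Q = -\<infinity> \<or> lin_sum T a2 Q = \<infinity>")
  case True
  then show ?thesis by auto
next
  case False
  have T: "finite T" "T \<subseteq> D" and wd1: "wd_sum T a1 Q"
    using rep1 by (auto simp: is_rep_def)
  have sign1: "\<forall>X\<in>T. (Q X = \<infinity> \<longrightarrow> 0 \<le> a1 X) \<and> (Q X = -\<infinity> \<longrightarrow> a1 X \<le> 0)"
    using False lin_sum_eq_MInf_iff[OF T(1) wd1] ereal_times_neq_MInf_iff by blast
  have sign2: "\<forall>X\<in>T. (Q X = \<infinity> \<longrightarrow> a2 X \<le> 0) \<and> (Q X = -\<infinity> \<longrightarrow> 0 \<le> a2 X)"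
    using False lin_sum_eq_PInf_iff[OF T(1)] ereal_times_neq_PInf_iff by blast
  define \<gamma> where "\<gamma> X = a1 X - a2 X" for X
  have zero: "(\<Sum>X\<in>T. \<gamma> X * X \<omega>) = 0" for \<omega>
    using rep1 rep2 unfolding is_rep_def \<gamma>_def
    by (simp add: left_diff_distrib sum_subtractf fun_eq_iff)
  have sign: "\<forall>X\<in>T. ereal (\<gamma> X) * Q X \<noteq> -\<infinity>"
    using sign1 sign2 unfolding ereal_times_neq_MInf_iff \<gamma>_def by force
  have finite_terms: "\<forall>X\<in>T. \<bar>Q X\<bar> = \<infinity> \<longrightarrow> a1 X = 0 \<and> a2 X = 0"
  proof (intro ballI impI)
    fix X assume X: "X \<in> T" "\<bar>Q X\<bar> = \<infinity>"
    then have "a1 X = a2 X"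
      using coherent1_zero_combination_finite[OF coh T zero sign] by (auto simp: \<gamma>_def)
    with X sign1 sign2 show "a1 X = 0 \<and> a2 X = 0" by force
  qed
  have "(\<Sum>X\<in>T. \<gamma> X * real_of_ereal (Q X)) \<le> 0"
    by (rule coherent1_zero_combination_le[OF coh T zero sign]) (auto simp: ereal_real')
  moreover have "lin_sum T a1 Q = ereal (\<Sum>X\<in>T. a1 X * real_of_ereal (Q X))"
    and "lin_sum T a2 Q = ereal (\<Sum>X\<in>T. a2 X * real_of_ereal (Q X))"
    using finite_terms by (auto intro!: lin_sum_real)
  ultimately show ?thesis by (simp add: \<gamma>_def left_diff_distrib sum_subtractf)
qed

lemma lin_sum_rep_unique:
  assumes coh: "coherent1 D Q" and rep1: "is_rep D Q Y S1 \<alpha>1" and rep2: "is_rep D Q Y S2 \<alpha>2"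
  shows "lin_sum S1 \<alpha>1 Q = lin_sum S2 \<alpha>2 Q"
proof -
  let ?T = "S1 \<union> S2"
  have T: "finite ?T" "?T \<subseteq> D" using rep1 rep2 by (auto simp: is_rep_def)
  note ext1 = is_rep_extend_zero[OF rep1 T(1) Un_upper1 T(2)]
  note ext2 = is_rep_extend_zero[OF rep2 T(1) Un_upper2 T(2)]
  show ?thesis
    using lin_sum_le_of_common_support[OF coh ext1(1) ext2(1)]
      lin_sum_le_of_common_support[OF coh ext2(1) ext1(1)] ext1(2) ext2(2)
    by simp
qed

definition lin_ext :: "('w \<Rightarrow> real) set \<Rightarrow> (('w \<Rightarrow> real) \<Rightarrow> ereal) \<Rightarrow> ('w \<Rightarrow> real) \<Rightarrow> ereal" where
  "lin_ext D Q Y = (SOME p. \<exists>S \<alpha>. is_rep D Q Y S \<alpha> \<and> p = lin_sum S \<alpha> Q)"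

lemma lin_ext_eq:
  assumes "coherent1 D Q" "is_rep D Q Y S \<alpha>"
  shows "lin_ext D Q Y = lin_sum S \<alpha> Q"
proof -
  have "\<exists>S' \<alpha>'. is_rep D Q Y S' \<alpha>' \<and> lin_ext D Q Y = lin_sum S' \<alpha>' Q"
    unfolding lin_ext_def by (rule someI) (use assms(2) in blast)
  then show ?thesis using lin_sum_rep_unique[OF assms(1) _ assms(2)] by metis
qed

lemma coherent1_extension_eq_lin_sum:
  assumes coh: "coherent1 (lin_dom D Q) P" and agree: "\<forall>X\<in>D. P X = Q X"
    and rep: "is_rep D Q Y S \<alpha>"
  shows "P Y = lin_sum S \<alpha> Q"
proof -
  have S: "finite S" "S \<subseteq> D" using rep by (auto simp: is_rep_def)
  then have "\<forall>X\<in>S. P X = Q X" using agree by blast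
  then have eq: "lin_sum S \<alpha> P = lin_sum S \<alpha> Q" and "wd_sum S \<alpha> P = wd_sum S \<alpha> Q"
    by (auto simp: lin_sum_def wd_sum_def intro!: sum.cong)
  then have "is_rep (lin_dom D Q) P Y S \<alpha>"
    using rep S subset_lin_dom[of D Q] by (auto simp: is_rep_def)
  moreover have "is_rep (lin_dom D Q) P Y {Y} (\<lambda>_. 1)"
    using rep by (intro is_rep_singleton) (auto simp: lin_dom_def)
  ultimately have "lin_sum S \<alpha> P = lin_sum {Y} (\<lambda>_. 1) P"
    by (rule lin_sum_rep_unique[OF coh])
  then show ?thesis using eq by (simp add: lin_sum_singleton)
qed

lemma sum_combination_swap:
  fixes f :: "'b \<Rightarrow> 'c::comm_semiring_0"
  shows "(\<Sum>Y\<in>S. \<alpha> Y * (\<Sum>X\<in>T. a Y X * f X)) = (\<Sum>X\<in>T. (\<Sum>Y\<in>S. \<alpha> Y * a Y X) * f X)"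
proof -
  have "(\<Sum>Y\<in>S. \<alpha> Y * (\<Sum>X\<in>T. a Y X * f X)) = (\<Sum>Y\<in>S. \<Sum>X\<in>T. \<alpha> Y * a Y X * f X)"
    by (simp add: sum_distrib_left mult.assoc)
  also have "\<dots> = (\<Sum>X\<in>T. \<Sum>Y\<in>S. \<alpha> Y * a Y X * f X)"
    by (rule sum.swap)
  also have "\<dots> = (\<Sum>X\<in>T. (\<Sum>Y\<in>S. \<alpha> Y * a Y X) * f X)"
    by (simp add: sum_distrib_right)
  finally show ?thesis .
qed

lemma ex_common_support:
  assumes "finite S" "S \<subseteq> lin_dom D Q"
  obtains T a where "finite T" "T \<subseteq> D" "\<forall>Y\<in>S. is_rep D Q Y T (a Y)"
proof -
  have "\<forall>Y\<in>S. \<exists>p. is_rep D Q Y (fst p) (snd p)"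
  proof
    fix Y assume "Y \<in> S"
    then obtain R A where "is_rep D Q Y R A" using assms(2) unfolding lin_dom_def by blast
    then show "\<exists>p. is_rep D Q Y (fst p) (snd p)" by (intro exI[of _ "(R, A)"]) simp
  qed
  then have "\<exists>p. \<forall>Y\<in>S. is_rep D Q Y (fst (p Y)) (snd (p Y))" by (rule bchoice)
  then obtain p where p: "\<forall>Y\<in>S. is_rep D Q Y (fst (p Y)) (snd (p Y))" ..
  define R A where "R Y = fst (p Y)" and "A Y = snd (p Y)" for Y
  have rep: "\<forall>Y\<in>S. is_rep D Q Y (R Y) (A Y)" using p by (simp add: R_def A_def)
  define T where "T = (\<Union>Y\<in>S. R Y)"
  have "\<forall>Y\<in>S. finite (R Y) \<and> R Y \<subseteq> D" using rep unfolding is_rep_def by blast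
  then have T: "finite T" "T \<subseteq> D" using assms(1) by (auto simp: T_def)
  have "\<forall>Y\<in>S. is_rep D Q Y T (extend_zero (R Y) (A Y))"
  proof
    fix Y assume "Y \<in> S"
    then have "is_rep D Q Y (R Y) (A Y)" "R Y \<subseteq> T" using rep by (auto simp: T_def)
    then show "is_rep D Q Y T (extend_zero (R Y) (A Y))"
      by (rule is_rep_extend_zero(1)[OF _ T(1) _ T(2)])
  qed
  with T show ?thesis by (rule that[of T "\<lambda>Y. extend_zero (R Y) (A Y)"])
qed

lemma combined_coefficient_sign:
  assumes "finite T" "X \<in> T" "\<forall>Y\<in>S. wd_sum T (a Y) Q"
    and "\<forall>Y\<in>S. P Y = lin_sum T (a Y) Q" "\<forall>Y\<in>S. ereal (\<alpha> Y) * P Y \<noteq> -\<infinity>"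
  shows "\<forall>Y\<in>S. ereal (\<alpha> Y * a Y X) * Q X \<noteq> -\<infinity>"
proof
  fix Y assume "Y \<in> S"
  with assms(3-5) have "wd_sum T (a Y) Q" "ereal (\<alpha> Y) * lin_sum T (a Y) Q \<noteq> -\<infinity>"
    by auto
  then show "ereal (\<alpha> Y * a Y X) * Q X \<noteq> -\<infinity>"
    by (rule lin_sum_term_sign[OF assms(1) _ assms(2)])
qed

text \<open>If a variable with infinite prevision keeps a nonzero combined coefficient, its price is
  free and absorbs everything; otherwise every Y with a nonzero coefficient has a finite value,
  namely its real combination of the values of Q.\<close>

lemma ex_values_for_combination:
  assumes S: "finite S" and T: "finite T"
    and wd: "\<forall>Y\<in>S. wd_sum T (a Y) Q" and P: "\<forall>Y\<in>S. P Y = lin_sum T (a Y) Q"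
    and sign: "\<forall>Y\<in>S. ereal (\<alpha> Y) * P Y \<noteq> -\<infinity>"
    and c: "\<forall>Y\<in>S. \<bar>P Y\<bar> \<noteq> \<infinity> \<longrightarrow> ereal (c Y) = P Y"
  shows "\<exists>d. (\<forall>X\<in>T. \<bar>Q X\<bar> \<noteq> \<infinity> \<longrightarrow> ereal (d X) = Q X)
           \<and> (\<Sum>X\<in>T. (\<Sum>Y\<in>S. \<alpha> Y * a Y X) * d X) = (\<Sum>Y\<in>S. \<alpha> Y * c Y)"
proof (cases "\<exists>X\<in>T. (\<Sum>Y\<in>S. \<alpha> Y * a Y X) \<noteq> 0 \<and> \<bar>Q X\<bar> = \<infinity>")
  case True
  then obtain X0 where "X0 \<in> T" "(\<Sum>Y\<in>S. \<alpha> Y * a Y X0) \<noteq> 0" "\<bar>Q X0\<bar> = \<infinity>" by auto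
  then show ?thesis by (rule ex_real_values_with_sum[OF T])
next
  case no_infinite_term: False
  have \<alpha>_c: "\<alpha> Y * c Y = \<alpha> Y * (\<Sum>X\<in>T. a Y X * real_of_ereal (Q X))" if Y: "Y \<in> S" for Y
  proof (cases "\<alpha> Y = 0")
    case False
    have "\<forall>X\<in>T. a Y X \<noteq> 0 \<longrightarrow> \<bar>Q X\<bar> \<noteq> \<infinity>"
    proof (intro ballI impI notI)
      fix X assume X: "X \<in> T" "a Y X \<noteq> 0" "\<bar>Q X\<bar> = \<infinity>"
      note term_sign = combined_coefficient_sign[OF T X(1) wd P sign]
      from sum_sign_consistent_neq_0[OF S term_sign X(3) Y] False X(2)
      have "(\<Sum>Y\<in>S. \<alpha> Y * a Y X) \<noteq> 0" by simp
      with X(1,3) no_infinite_term show False by auto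
    qed
    with P Y have "P Y = ereal (\<Sum>X\<in>T. a Y X * real_of_ereal (Q X))"
      by (simp add: lin_sum_real)
    then have "c Y = (\<Sum>X\<in>T. a Y X * real_of_ereal (Q X))" using bspec[OF c Y] by simp
    then show ?thesis by simp
  qed simp
  have "(\<Sum>Y\<in>S. \<alpha> Y * c Y) = (\<Sum>X\<in>T. (\<Sum>Y\<in>S. \<alpha> Y * a Y X) * real_of_ereal (Q X))"
    unfolding sum_combination_swap[symmetric] by (rule sum.cong[OF refl \<alpha>_c])
  then show ?thesis by (auto simp: ereal_real' intro!: exI[of _ "\<lambda>X. real_of_ereal (Q X)"])
qed

lemma coherent1_lin_ext:
  assumes coh: "coherent1 D Q"
  shows "coherent1 (lin_dom D Q) (lin_ext D Q)"
proof (rule coherent1I)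
  fix S \<alpha> c
  assume S: "finite S" "S \<subseteq> lin_dom D Q"
    and sign: "\<forall>Y\<in>S. ereal (\<alpha> Y) * lin_ext D Q Y \<noteq> -\<infinity>"
    and c: "\<forall>Y\<in>S. \<bar>lin_ext D Q Y\<bar> \<noteq> \<infinity> \<longrightarrow> ereal (c Y) = lin_ext D Q Y"
  obtain T a where T: "finite T" "T \<subseteq> D" and rep: "\<forall>Y\<in>S. is_rep D Q Y T (a Y)"
    using ex_common_support[OF S] .
  have P: "\<forall>Y\<in>S. lin_ext D Q Y = lin_sum T (a Y) Q"
    using rep by (auto intro: lin_ext_eq[OF coh])
  have wd: "\<forall>Y\<in>S. wd_sum T (a Y) Q"
    using rep unfolding is_rep_def by blast
  define \<beta> where "\<beta> X = (\<Sum>Y\<in>S. \<alpha> Y * a Y X)" for X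
  have \<beta>_sign: "\<forall>X\<in>T. ereal (\<beta> X) * Q X \<noteq> -\<infinity>"
  proof
    fix X assume "X \<in> T"
    then show "ereal (\<beta> X) * Q X \<noteq> -\<infinity>"
      unfolding \<beta>_def by (rule sum_sign_consistent[OF combined_coefficient_sign[OF T(1) _ wd P sign]])
  qed
  obtain d where d: "\<forall>X\<in>T. \<bar>Q X\<bar> \<noteq> \<infinity> \<longrightarrow> ereal (d X) = Q X"
    and d_sum: "(\<Sum>X\<in>T. \<beta> X * d X) = (\<Sum>Y\<in>S. \<alpha> Y * c Y)"
    using ex_values_for_combination[OF S(1) T(1) wd P sign c] unfolding \<beta>_def by blast
  have rep_eval: "\<alpha> Y * Y \<omega> = \<alpha> Y * (\<Sum>X\<in>T. a Y X * X \<omega>)" if "Y \<in> S" for Y \<omega>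
  proof -
    have "Y = (\<lambda>\<omega>. \<Sum>X\<in>T. a Y X * X \<omega>)" using rep that unfolding is_rep_def by blast
    from fun_cong[OF this, of \<omega>] show ?thesis by simp
  qed
  have gamble_eq: "(\<Sum>Y\<in>S. \<alpha> Y * (Y \<omega> - c Y)) = (\<Sum>X\<in>T. \<beta> X * (X \<omega> - d X))" for \<omega>
  proof -
    have "(\<Sum>Y\<in>S. \<alpha> Y * (Y \<omega> - c Y)) = (\<Sum>Y\<in>S. \<alpha> Y * Y \<omega>) - (\<Sum>Y\<in>S. \<alpha> Y * c Y)"
      by (simp add: right_diff_distrib sum_subtractf)
    also have "(\<Sum>Y\<in>S. \<alpha> Y * Y \<omega>) = (\<Sum>X\<in>T. \<beta> X * X \<omega>)"
      unfolding \<beta>_def sum_combination_swap[symmetric] by (rule sum.cong[OF refl rep_eval])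
    also have "(\<Sum>X\<in>T. \<beta> X * X \<omega>) - (\<Sum>Y\<in>S. \<alpha> Y * c Y) = (\<Sum>X\<in>T. \<beta> X * (X \<omega> - d X))"
      unfolding d_sum[symmetric] by (simp add: right_diff_distrib sum_subtractf)
    finally show ?thesis .
  qed
  show "0 \<le> (SUP \<omega>. ereal (\<Sum>Y\<in>S. \<alpha> Y * (Y \<omega> - c Y)))"
    unfolding gamble_eq by (rule coherent1D[OF coh T \<beta>_sign d])
qed

theorem lemma5p3:
  fixes D :: "('w \<Rightarrow> real) set" and Q :: "('w \<Rightarrow> real) \<Rightarrow> ereal"
  assumes const_in: "\<And>c::real. (\<lambda>_. c) \<in> D"
    and coh: "coherent1 D Q"
  shows "(\<forall>Y S1 \<alpha>1 S2 \<alpha>2. is_rep D Q Y S1 \<alpha>1 \<and> is_rep D Q Y S2 \<alpha>2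
            \<longrightarrow> lin_sum S1 \<alpha>1 Q = lin_sum S2 \<alpha>2 Q)
       \<and> (\<exists>P. (\<forall>Y S \<alpha>. is_rep D Q Y S \<alpha> \<longrightarrow> P Y = lin_sum S \<alpha> Q)
              \<and> (\<forall>X\<in>D. P X = Q X)
              \<and> coherent1 (lin_dom D Q) P
              \<and> (\<forall>P'. coherent1 (lin_dom D Q) P' \<and> (\<forall>X\<in>D. P' X = Q X)
                     \<longrightarrow> (\<forall>Y\<in>lin_dom D Q. P' Y = P Y)))"
proof -
  have rep_eq: "\<forall>Y S \<alpha>. is_rep D Q Y S \<alpha> \<longrightarrow> lin_ext D Q Y = lin_sum S \<alpha> Q"
    using lin_ext_eq[OF coh] by blast
  moreover have "\<forall>X\<in>D. lin_ext D Q X = Q X"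
    using rep_eq is_rep_singleton lin_sum_singleton by metis
  moreover have "\<forall>P'. coherent1 (lin_dom D Q) P' \<and> (\<forall>X\<in>D. P' X = Q X)
                    \<longrightarrow> (\<forall>Y\<in>lin_dom D Q. P' Y = lin_ext D Q Y)"
    using coherent1_extension_eq_lin_sum rep_eq unfolding lin_dom_def by fastforce
  ultimately show ?thesis
    using lin_sum_rep_unique[OF coh] coherent1_lin_ext[OF coh] by blast
qed

end
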